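(* Let $m\ge 1$, $r\ge 1$, and for a multi-index $\alpha=(\alpha_1,\dots,\alpha_r)\in\mathbb Z_{\ge 0}^r$ put $|\alpha|=\sum_{l=1}^r\alpha_l$ and $w(\alpha)=\sum_{l=1}^r l\,\alpha_l$. For $0\le k\le j$ define the polynomials $$\mathcal M^{(r)}_{k,j}(t_1,\dots,t_r)=\sum_{|\alpha|=k,\ w(\alpha)=j}\frac{k!}{\alpha_1!\cdots\alpha_r!}\prod_{l=1}^r t_l^{\alpha_l},$$ i.e. $\mathcal M^{(r)}_{k,j}$ is the coefficient of $\varepsilon^j$ in $\big(\sum_{l=1}^r t_l\varepsilon^l\big)^k$, and set $\mathcal M^{(r)}_{k,j}=0$ for $k>j$. Consider an $\varepsilon$-dependent family of $\mathfrak{gl}_m(\mathbb C)$-valued connection matrices of the form $$A(\lambda)=\sum_{k=0}^{r-1}\frac{B_k}{(\lambda-u)^{k+1}}+\frac{C}{\lambda-v}+(\text{terms holomorphic at }\lambda=u\text{ and }\lambda=v),\qquad B_k=\sum_{j=k}^{r-1}A_j\,\mathcal M^{(r-1)}_{k,j}(t_1,\dots,t_{r-1}),$$ where $$v=u+\sum_{i=1}^r t_i\varepsilon^i,$$ and assume that, as $\varepsilon\to0$, there are $\varepsilon$-independent matrices $W^{[j]}$ ($j\ge -r$) and $A^{[k,l]}$ ($0\le k\le r-1$, $l\ge 0$) with asymptotic expansions $$C\sim\sum_{j=-r}^{\infty}W^{[j]}\varepsilon^j,\qquad A_k\sim-\sum_{l=1}^{r-k}\frac{W^{[-k-l]}}{\varepsilon^l}+A^{[k,0]}+\sum_{l=1}^\infty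 A^{[k,l]}\varepsilon^l\quad(0\le k\le r-1),$$ the holomorphic terms having a finite limit. Then the limit $\varepsilon\to0$ of the connection exists and equals $$\tilde A(\lambda)=\sum_{i=0}^{r}\frac{\tilde B_i(t_1,\dots,t_r)}{(\lambda-u)^{i+1}}+(\text{holomorphic terms}),\qquad \tilde B_i=\sum_{k=i}^{r}\tilde A_k\,\mathcal M^{(r)}_{i,k}(t_1,\dots,t_r),$$ where $\tilde A_k=W^{[-k]}+A^{[k,0]}$ for $k<r$ and $\tilde A_r=W^{[-r]}$.
   Context: The matrices $A_j,C,W^{[j]},A^{[k,l]}$ are $m\times m$ complex matrices (possibly depending on further variables), $u$ and $t_1,\dots,t_r$ are complex parameters and $\varepsilon$ is a small complex parameter; $\lambda$ is the spectral variable on $\mathbb{CP}^1$. *)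

theory Defs
  imports "HOL-Complex_Analysis.Complex_Analysis"
begin

text \<open>m x m complex matrices are modelled as complex^'m^'m (m = CARD('m) \<ge> 1).\<close>

type_synonym 'm cmat = "complex ^ 'm ^ 'm"

no_notation fps_nth (infixl "$" 75)

definition csc :: "complex \<Rightarrow> ('m::finite) cmat \<Rightarrow> 'm cmat" where
  "csc c A = (\<chi> i j. c * A $ i $ j)"

definition multi_idx :: "nat \<Rightarrow> nat \<Rightarrow> nat \<Rightarrow> (nat \<Rightarrow> nat) set" where
  "multi_idx r k j = {\<alpha>. (\<forall>l. l \<notin> {1..r} \<longrightarrow> \<alpha> l = 0)
                      \<and> (\<Sum>l=1..r. \<alpha> l) = k \<and> (\<Sum>l=1..r. l * \<alpha> l) = j}"

text \<open>The polynomial M^(r)_{k,j}(t_1,...,t_r); it is automatically 0 for k > j.\<close>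

definition Mpoly :: "nat \<Rightarrow> nat \<Rightarrow> nat \<Rightarrow> (nat \<Rightarrow> complex) \<Rightarrow> complex" where
  "Mpoly r k j t = (\<Sum>\<alpha>\<in>multi_idx r k j.
      (of_nat (fact k) / of_nat (\<Prod>l=1..r. fact (\<alpha> l))) * (\<Prod>l=1..r. t l ^ \<alpha> l))"

definition has_asymp_exp :: "(complex \<Rightarrow> ('m::finite) cmat) \<Rightarrow> int \<Rightarrow> (int \<Rightarrow> 'm cmat) \<Rightarrow> bool" where
  "has_asymp_exp f lo c \<longleftrightarrow>
     (\<forall>N\<ge>lo. \<exists>K. \<forall>\<^sub>F \<epsilon> in at 0.
        norm (f \<epsilon> - (\<Sum>j\<in>{lo..N}. csc (\<epsilon> powi j) (c j))) \<le> K * cmod \<epsilon> powr of_int (N + 1))"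

definition mat_holo_on :: "(complex \<Rightarrow> ('m::finite) cmat) \<Rightarrow> complex set \<Rightarrow> bool" where
  "mat_holo_on f U \<longleftrightarrow> (\<forall>i j. (\<lambda>z. f z $ i $ j) holomorphic_on U)"

end

theory Submission
  imports Defs
begin

(* Put a = z - u and delta(eps) = t_1 eps + ... + t_r eps^r, so that z - v = a - delta and
   1/(a - delta) = sum_{n<=r} delta^n / a^(n+1) + delta^(r+1) / (a^(r+1) (a - delta)).
   The coefficient of a^-(n+1) is then E_n = delta^n C + sum_j M^(r)_{n,j} A_j, since
   M^(r-1)_{n,j} = M^(r)_{n,j} for j < r. By the multinomial theorem
   delta^n = sum_j M^(r)_{n,j} eps^j, and the poles eps^-s of C, multiplied by the part of
   delta^n of degree < s, cancel exactly against the poles of the A_j. What survives in the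
   limit is sum_k M^(r)_{n,k} A~_k, which vanishes for n = r + 1. *)

definition multi_indices :: "'a set \<Rightarrow> nat \<Rightarrow> ('a \<Rightarrow> nat) set" where
  "multi_indices L k = {\<alpha>. (\<forall>l. l \<notin> L \<longrightarrow> \<alpha> l = 0) \<and> (\<Sum>l\<in>L. \<alpha> l) = k}"

lemma multi_indices_empty: "multi_indices {} k = (if k = 0 then {\<lambda>_. 0} else {})"
  by (auto simp: multi_indices_def)

lemma finite_multi_indices:
  assumes "finite L"
  shows "finite (multi_indices L k)"
proof (rule finite_subset)
  show "multi_indices L k \<subseteq> (\<lambda>f l. if l \<in> L then f l else 0) ` (L \<rightarrow>\<^sub>E {..k})"
  proof
    fix \<alpha> assume \<alpha>: "\<alpha> \<in> multi_indices L k"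
    then have "\<alpha> l \<le> k" if "l \<in> L" for l
      using member_le_sum[OF that _ assms, of \<alpha>] by (simp add: multi_indices_def)
    with \<alpha> show "\<alpha> \<in> (\<lambda>f l. if l \<in> L then f l else 0) ` (L \<rightarrow>\<^sub>E {..k})"
      by (intro image_eqI[of _ _ "restrict \<alpha> L"]) (auto simp: multi_indices_def fun_eq_iff)
  qed
qed (use assms in \<open>simp add: finite_PiE\<close>)

lemma sum_multi_indices_insert:
  assumes "finite L" "a \<notin> L"
  shows "(\<Sum>\<alpha>\<in>multi_indices (insert a L) k. g \<alpha>) =
    (\<Sum>i\<le>k. \<Sum>\<beta>\<in>multi_indices L (k - i). g (\<beta>(a := i)))"
proof -
  have "(\<Sum>\<alpha>\<in>multi_indices (insert a L) k. g \<alpha>) =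
      (\<Sum>(i, \<beta>)\<in>(SIGMA i:{..k}. multi_indices L (k - i)). g (\<beta>(a := i)))"
  proof (rule sum.reindex_bij_witness[where j = "\<lambda>\<alpha>. (\<alpha> a, \<alpha>(a := 0))" and i = "\<lambda>(i, \<beta>). \<beta>(a := i)"])
    fix \<alpha> assume \<alpha>: "\<alpha> \<in> multi_indices (insert a L) k"
    have "(\<Sum>l\<in>L. (\<alpha>(a := 0)) l) = (\<Sum>l\<in>L. \<alpha> l)"
      using assms(2) by (intro sum.cong) auto
    with \<alpha> assms show "(\<alpha> a, \<alpha>(a := 0)) \<in> (SIGMA i:{..k}. multi_indices L (k - i))"
      by (auto simp: multi_indices_def)
  next
    fix i\<beta> assume "i\<beta> \<in> (SIGMA i:{..k}. multi_indices L (k - i))"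
    then obtain i \<beta> where i\<beta>: "i\<beta> = (i, \<beta>)" "i \<le> k" "\<beta> \<in> multi_indices L (k - i)"
      by blast
    then have "\<beta> a = 0"
      using assms(2) by (simp add: multi_indices_def)
    moreover have "(\<Sum>l\<in>L. (\<beta>(a := i)) l) = (\<Sum>l\<in>L. \<beta> l)"
      using assms(2) by (intro sum.cong) auto
    ultimately show "(\<lambda>\<alpha>. (\<alpha> a, \<alpha>(a := 0))) ((\<lambda>(i, \<beta>). \<beta>(a := i)) i\<beta>) = i\<beta>"
      "(\<lambda>(i, \<beta>). \<beta>(a := i)) i\<beta> \<in> multi_indices (insert a L) k"
      using i\<beta> assms by (auto simp: multi_indices_def)
  qed auto
  also have "\<dots> = (\<Sum>i\<le>k. \<Sum>\<beta>\<in>multi_indices L (k - i). g (\<beta>(a := i)))"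
    by (simp add: sum.Sigma finite_multi_indices assms)
  finally show ?thesis .
qed

theorem multinomial_ring:
  fixes x :: "'a \<Rightarrow> 'b::field_char_0"
  assumes "finite L"
  shows "(\<Sum>l\<in>L. x l) ^ k =
    (\<Sum>\<alpha>\<in>multi_indices L k. fact k / (\<Prod>l\<in>L. fact (\<alpha> l)) * (\<Prod>l\<in>L. x l ^ \<alpha> l))"
  using assms
proof (induction L arbitrary: k rule: finite_induct)
  case empty
  then show ?case by (simp add: multi_indices_empty)
next
  case (insert a L)
  define c where "c \<alpha> = fact k / (\<Prod>l\<in>insert a L. fact (\<alpha> l)) * (\<Prod>l\<in>insert a L. x l ^ \<alpha> l)"
    for \<alpha> :: "'a \<Rightarrow> nat"
  have summand: "of_nat (k choose i) * x a ^ i *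
      (fact (k - i) / (\<Prod>l\<in>L. fact (\<beta> l)) * (\<Prod>l\<in>L. x l ^ \<beta> l)) = c (\<beta>(a := i))"
    if "i \<le> k" for i \<beta>
  proof -
    have "(\<Prod>l\<in>L. fact ((\<beta>(a := i)) l)) = (\<Prod>l\<in>L. fact (\<beta> l) :: 'b)"
      "(\<Prod>l\<in>L. x l ^ (\<beta>(a := i)) l) = (\<Prod>l\<in>L. x l ^ \<beta> l)"
      using insert.hyps(2) by (auto intro!: prod.cong)
    moreover have "(\<Prod>l\<in>L. fact (\<beta> l) :: 'b) \<noteq> 0"
      by (simp add: insert.hyps(1))
    ultimately show ?thesis
      using that insert.hyps by (simp add: c_def binomial_fact field_simps)
  qed
  have "(\<Sum>l\<in>insert a L. x l) ^ k = (\<Sum>i\<le>k. of_nat (k choose i) * x a ^ i * (\<Sum>l\<in>L. x l) ^ (k - i))"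
    using insert.hyps by (simp add: binomial_ring)
  also have "\<dots> = (\<Sum>i\<le>k. \<Sum>\<beta>\<in>multi_indices L (k - i). c (\<beta>(a := i)))"
    unfolding insert.IH sum_distrib_left by (intro sum.cong refl summand) simp
  also have "\<dots> = (\<Sum>\<alpha>\<in>multi_indices (insert a L) k. c \<alpha>)"
    by (rule sum_multi_indices_insert[OF insert.hyps, symmetric])
  finally show ?case by (simp add: c_def)
qed

lemma multi_idx_eq: "multi_idx r k j = {\<alpha> \<in> multi_indices {1..r} k. (\<Sum>l=1..r. l * \<alpha> l) = j}"
  by (auto simp: multi_idx_def multi_indices_def)

lemma weight_le_multi_indices:
  assumes "\<alpha> \<in> multi_indices {1..r} n"
  shows "(\<Sum>l=1..r. l * \<alpha> l) \<le> r * n"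
proof -
  have "(\<Sum>l=1..r. l * \<alpha> l) \<le> (\<Sum>l=1..r. r * \<alpha> l)"
    by (intro sum_mono) auto
  also have "\<dots> = r * n"
    using assms by (simp add: multi_indices_def flip: sum_distrib_left)
  finally show ?thesis .
qed

lemma power_sum_Mpoly:
  fixes t :: "nat \<Rightarrow> complex"
  assumes "r * n \<le> D"
  shows "(\<Sum>i=1..r. t i * \<epsilon> ^ i) ^ n = (\<Sum>j\<le>D. Mpoly r n j t * \<epsilon> ^ j)"
proof -
  define w where "w \<alpha> = (\<Sum>l=1..r. l * \<alpha> l)" for \<alpha> :: "nat \<Rightarrow> nat"
  define c where "c \<alpha> = of_nat (fact n) / of_nat (\<Prod>l=1..r. fact (\<alpha> l)) * (\<Prod>l=1..r. t l ^ \<alpha> l)"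
    for \<alpha> :: "nat \<Rightarrow> nat"
  have monomial: "(\<Prod>l=1..r. (t l * \<epsilon> ^ l) ^ \<alpha> l) = (\<Prod>l=1..r. t l ^ \<alpha> l) * \<epsilon> ^ w \<alpha>" for \<alpha>
    by (simp add: w_def power_mult_distrib prod.distrib power_sum flip: power_mult)
  have "(\<Sum>i=1..r. t i * \<epsilon> ^ i) ^ n = (\<Sum>\<alpha>\<in>multi_indices {1..r} n. c \<alpha> * \<epsilon> ^ w \<alpha>)"
    unfolding multinomial_ring[OF finite_atLeastAtMost] monomial
    by (simp add: c_def of_nat_prod mult_ac)
  also have "\<dots> = (\<Sum>j\<le>D. \<Sum>\<alpha>\<in>{\<alpha> \<in> multi_indices {1..r} n. w \<alpha> = j}. c \<alpha> * \<epsilon> ^ w \<alpha>)"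
    using weight_le_multi_indices assms
    by (intro sum.group[symmetric]) (auto simp: finite_multi_indices w_def intro: order_trans)
  also have "\<dots> = (\<Sum>j\<le>D. Mpoly r n j t * \<epsilon> ^ j)"
    by (simp add: Mpoly_def multi_idx_eq c_def w_def sum_distrib_right)
  finally show ?thesis .
qed

lemma Mpoly_eq_0_if_less:
  assumes "j < k"
  shows "Mpoly r k j t = 0"
proof -
  have "multi_idx r k j = {}"
  proof (intro equals0I)
    fix \<alpha> assume "\<alpha> \<in> multi_idx r k j"
    then have "k = (\<Sum>l=1..r. \<alpha> l)" "j = (\<Sum>l=1..r. l * \<alpha> l)"
      by (simp_all add: multi_idx_def)
    moreover have "(\<Sum>l=1..r. \<alpha> l) \<le> (\<Sum>l=1..r. l * \<alpha> l)"
      by (intro sum_mono) auto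
    ultimately show False
      using assms by linarith
  qed
  then show ?thesis
    by (simp add: Mpoly_def)
qed

lemma multi_idx_Suc:
  assumes "j \<le> r"
  shows "multi_idx (Suc r) k j = multi_idx r k j"
proof -
  have top_zero: "\<alpha> (Suc r) = 0" if "\<alpha> \<in> multi_idx (Suc r) k j" for \<alpha>
  proof -
    have "Suc r * \<alpha> (Suc r) \<le> (\<Sum>l=1..Suc r. l * \<alpha> l)"
      by (rule member_le_sum[of "Suc r" _ "\<lambda>l. l * \<alpha> l"]) auto
    also have "\<dots> = j"
      using that by (simp add: multi_idx_def)
    finally show ?thesis
      using assms by (cases "\<alpha> (Suc r)") auto
  qed
  have "\<alpha> \<in> multi_idx (Suc r) k j \<longleftrightarrow> \<alpha> \<in> multi_idx r k j" if "\<alpha> (Suc r) = 0" for \<alpha>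
    using that by (auto simp: multi_idx_def le_Suc_eq)
  moreover have "\<alpha> (Suc r) = 0" if "\<alpha> \<in> multi_idx r k j" for \<alpha>
    using that by (simp add: multi_idx_def)
  ultimately show ?thesis
    using top_zero by blast
qed

lemma Mpoly_Suc:
  assumes "j \<le> r"
  shows "Mpoly (Suc r) k j t = Mpoly r k j t"
  unfolding Mpoly_def multi_idx_Suc[OF assms]
  by (intro sum.cong refl) (simp add: multi_idx_def)

lemma tendsto_poly_tail_div_power:
  fixes p :: "nat \<Rightarrow> 'a::real_normed_field"
  assumes "s \<le> D"
  shows "((\<lambda>\<epsilon>. ((\<Sum>j\<le>D. p j * \<epsilon> ^ j) - (\<Sum>j<s. p j * \<epsilon> ^ j)) / \<epsilon> ^ s) \<longlongrightarrow> p s) (at 0)"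
proof -
  have "((\<lambda>\<epsilon>. \<Sum>j=s..D. p j * \<epsilon> ^ (j - s)) \<longlongrightarrow> (\<Sum>j=s..D. p j * 0 ^ (j - s))) (at 0)"
    by (intro tendsto_intros)
  also have "(\<Sum>j=s..D. p j * 0 ^ (j - s)) = (\<Sum>j=s..D. if j = s then p s else 0)"
    by (intro sum.cong) (auto simp: power_0_left)
  also have "\<dots> = p s"
    using assms by simp
  finally have "((\<lambda>\<epsilon>. \<Sum>j=s..D. p j * \<epsilon> ^ (j - s)) \<longlongrightarrow> p s) (at 0)" .
  moreover have "\<forall>\<^sub>F \<epsilon> in at 0. (\<Sum>j=s..D. p j * \<epsilon> ^ (j - s)) =
      ((\<Sum>j\<le>D. p j * \<epsilon> ^ j) - (\<Sum>j<s. p j * \<epsilon> ^ j)) / \<epsilon> ^ s"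
  proof (rule eventually_mono[OF eventually_neq_at_within[of 0 0]])
    fix \<epsilon> :: 'a assume "\<epsilon> \<noteq> 0"
    have "{..D} = {..<s} \<union> {s..D}"
      using assms by auto
    then have "(\<Sum>j\<le>D. p j * \<epsilon> ^ j) = (\<Sum>j<s. p j * \<epsilon> ^ j) + (\<Sum>j=s..D. p j * \<epsilon> ^ j)"
      by (simp add: sum.union_disjoint ivl_disj_int_one)
    then have "(\<Sum>j\<le>D. p j * \<epsilon> ^ j) - (\<Sum>j<s. p j * \<epsilon> ^ j) = (\<Sum>j=s..D. p j * \<epsilon> ^ j)"
      by simp
    also have "\<dots> = (\<Sum>j=s..D. p j * \<epsilon> ^ (j - s)) * \<epsilon> ^ s"
      by (simp add: sum_distrib_right mult.assoc flip: power_add)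
    finally show "(\<Sum>j=s..D. p j * \<epsilon> ^ (j - s)) =
        ((\<Sum>j\<le>D. p j * \<epsilon> ^ j) - (\<Sum>j<s. p j * \<epsilon> ^ j)) / \<epsilon> ^ s"
      using \<open>\<epsilon> \<noteq> 0\<close> by simp
  qed
  ultimately show ?thesis
    by (rule Lim_transform_eventually)
qed

lemma tendsto_poly_times_laurent:
  fixes p w b :: "nat \<Rightarrow> 'a::real_normed_field"
    and \<gamma> :: "'a \<Rightarrow> 'a" and \<alpha> :: "nat \<Rightarrow> 'a \<Rightarrow> 'a"
  assumes "r \<le> D"
    and \<gamma>: "((\<lambda>\<epsilon>. \<gamma> \<epsilon> - (\<Sum>s\<le>r. w s / \<epsilon> ^ s)) \<longlongrightarrow> 0) (at 0)"
    and \<alpha>: "\<And>j. j < r \<Longrightarrow>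
      ((\<lambda>\<epsilon>. \<alpha> j \<epsilon> - (b j - (\<Sum>s=Suc j..r. w s * \<epsilon> ^ j / \<epsilon> ^ s))) \<longlongrightarrow> 0) (at 0)"
  shows "((\<lambda>\<epsilon>. (\<Sum>j\<le>D. p j * \<epsilon> ^ j) * \<gamma> \<epsilon> + (\<Sum>j<r. p j * \<alpha> j \<epsilon>))
           \<longlongrightarrow> (\<Sum>s\<le>r. w s * p s) + (\<Sum>j<r. p j * b j)) (at 0)"
proof -
  define P where "P \<epsilon> = (\<Sum>j\<le>D. p j * \<epsilon> ^ j)" for \<epsilon>
  define R\<gamma> where "R\<gamma> \<epsilon> = \<gamma> \<epsilon> - (\<Sum>s\<le>r. w s / \<epsilon> ^ s)" for \<epsilon>
  define R\<alpha> where "R\<alpha> j \<epsilon> = \<alpha> j \<epsilon> - (b j - (\<Sum>s=Suc j..r. w s * \<epsilon> ^ j / \<epsilon> ^ s))" for j \<epsilon>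
  define tail where "tail s \<epsilon> = (P \<epsilon> - (\<Sum>j<s. p j * \<epsilon> ^ j)) / \<epsilon> ^ s" for s \<epsilon>
  \<comment> \<open>The poles of the \<open>\<alpha> j\<close> cancel the terms \<open>p j \<epsilon>^j w s / \<epsilon>^s\<close> with \<open>j < s\<close> of \<open>P \<epsilon> * \<gamma> \<epsilon>\<close>.\<close>
  have poles: "(\<Sum>j<r. p j * (\<Sum>s=Suc j..r. w s * \<epsilon> ^ j / \<epsilon> ^ s)) =
      (\<Sum>s\<le>r. w s * (\<Sum>j<s. p j * \<epsilon> ^ j) / \<epsilon> ^ s)" for \<epsilon>
  proof -
    have "(\<Sum>j<r. p j * (\<Sum>s=Suc j..r. w s * \<epsilon> ^ j / \<epsilon> ^ s)) =
        (\<Sum>j<r. \<Sum>s=Suc j..r. p j * (w s * \<epsilon> ^ j / \<epsilon> ^ s))"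
      by (simp add: sum_distrib_left)
    also have "\<dots> = (\<Sum>s\<le>r. \<Sum>j<s. p j * (w s * \<epsilon> ^ j / \<epsilon> ^ s))"
      by (rule sum.nested_swap'[symmetric])
    also have "\<dots> = (\<Sum>s\<le>r. w s * (\<Sum>j<s. p j * \<epsilon> ^ j) / \<epsilon> ^ s)"
      by (intro sum.cong refl) (simp add: sum_distrib_left sum_divide_distrib mult_ac)
    finally show ?thesis .
  qed
  have tails: "(\<Sum>s\<le>r. w s * tail s \<epsilon>) =
      P \<epsilon> * (\<Sum>s\<le>r. w s / \<epsilon> ^ s) - (\<Sum>s\<le>r. w s * (\<Sum>j<s. p j * \<epsilon> ^ j) / \<epsilon> ^ s)" for \<epsilon>
    by (simp add: tail_def sum_distrib_left sum_subtractf diff_divide_distrib right_diff_distrib mult_ac)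
  have decomp: "P \<epsilon> * \<gamma> \<epsilon> + (\<Sum>j<r. p j * \<alpha> j \<epsilon>) =
      P \<epsilon> * R\<gamma> \<epsilon> + (\<Sum>j<r. p j * R\<alpha> j \<epsilon>) + (\<Sum>s\<le>r. w s * tail s \<epsilon>) + (\<Sum>j<r. p j * b j)" for \<epsilon>
  proof -
    have "P \<epsilon> * \<gamma> \<epsilon> + (\<Sum>j<r. p j * \<alpha> j \<epsilon>) =
        P \<epsilon> * R\<gamma> \<epsilon> + P \<epsilon> * (\<Sum>s\<le>r. w s / \<epsilon> ^ s) + (\<Sum>j<r. p j * R\<alpha> j \<epsilon>) + (\<Sum>j<r. p j * b j)
        - (\<Sum>j<r. p j * (\<Sum>s=Suc j..r. w s * \<epsilon> ^ j / \<epsilon> ^ s))"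
      by (simp add: R\<gamma>_def R\<alpha>_def algebra_simps sum_subtractf sum.distrib)
    then show ?thesis
      by (simp only: poles tails) simp
  qed
  have "((\<lambda>\<epsilon>. P \<epsilon> * R\<gamma> \<epsilon> + (\<Sum>j<r. p j * R\<alpha> j \<epsilon>) + (\<Sum>s\<le>r. w s * tail s \<epsilon>) + (\<Sum>j<r. p j * b j))
      \<longlongrightarrow> P 0 * 0 + (\<Sum>j<r. p j * 0) + (\<Sum>s\<le>r. w s * p s) + (\<Sum>j<r. p j * b j)) (at 0)"
  proof (intro tendsto_intros)
    show "(P \<longlongrightarrow> P 0) (at 0)"
      unfolding P_def by (intro tendsto_intros)
    show "(R\<gamma> \<longlongrightarrow> 0) (at 0)"
      using \<gamma> by (simp add: R\<gamma>_def[abs_def])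
    show "(R\<alpha> j \<longlongrightarrow> 0) (at 0)" if "j \<in> {..<r}" for j
      using \<alpha> that by (simp add: R\<alpha>_def[abs_def])
    show "(tail s \<longlongrightarrow> p s) (at 0)" if "s \<in> {..r}" for s
      unfolding tail_def[abs_def] P_def using that assms by (intro tendsto_poly_tail_div_power) simp
  qed
  then have "((\<lambda>\<epsilon>. P \<epsilon> * \<gamma> \<epsilon> + (\<Sum>j<r. p j * \<alpha> j \<epsilon>))
      \<longlongrightarrow> (\<Sum>s\<le>r. w s * p s) + (\<Sum>j<r. p j * b j)) (at 0)"
    by (simp only: decomp) simp
  then show ?thesis
    by (simp only: P_def)
qed

lemma sum_Mpoly_lessThan:
  "(\<Sum>j\<in>{n..<r}. Mpoly R n j t * f j) = (\<Sum>j<r. Mpoly R n j t * f j)"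
  by (rule sum.mono_neutral_left) (auto simp: Mpoly_eq_0_if_less)

lemma sum_Mpoly_atMost:
  "(\<Sum>j=n..r. Mpoly R n j t * f j) = (\<Sum>j\<le>r. Mpoly R n j t * f j)"
  by (rule sum.mono_neutral_left) (auto simp: Mpoly_eq_0_if_less)

lemma tendsto_Mpoly_laurent:
  fixes t w b \<AA> :: "nat \<Rightarrow> complex" and \<gamma> :: "complex \<Rightarrow> complex" and \<alpha> :: "nat \<Rightarrow> complex \<Rightarrow> complex"
  assumes \<gamma>: "((\<lambda>\<epsilon>. \<gamma> \<epsilon> - (\<Sum>s\<le>r. w s / \<epsilon> ^ s)) \<longlongrightarrow> 0) (at 0)"
    and \<alpha>: "\<And>j. j < r \<Longrightarrow>
      ((\<lambda>\<epsilon>. \<alpha> j \<epsilon> - (b j - (\<Sum>s=Suc j..r. w s * \<epsilon> ^ j / \<epsilon> ^ s))) \<longlongrightarrow> 0) (at 0)"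
    and \<AA>: "\<And>k. k \<le> r \<Longrightarrow> \<AA> k = (if k < r then w k + b k else w k)"
  shows "((\<lambda>\<epsilon>. (\<Sum>i=1..r. t i * \<epsilon> ^ i) ^ n * \<gamma> \<epsilon> + (\<Sum>j<r. Mpoly r n j t * \<alpha> j \<epsilon>))
           \<longlongrightarrow> (\<Sum>k=n..r. Mpoly r n k t * \<AA> k)) (at 0)"
proof -
  have "(\<Sum>k=n..r. Mpoly r n k t * \<AA> k) = (\<Sum>k\<le>r. Mpoly r n k t * (if k < r then w k + b k else w k))"
    by (simp add: sum_Mpoly_atMost \<AA>)
  also have "\<dots> = (\<Sum>s\<le>r. w s * Mpoly r n s t) + (\<Sum>j<r. Mpoly r n j t * b j)"
    by (simp add: lessThan_Suc_atMost[symmetric] sum.distrib algebra_simps)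
  finally have limit: "(\<Sum>k=n..r. Mpoly r n k t * \<AA> k) =
      (\<Sum>s\<le>r. w s * Mpoly r n s t) + (\<Sum>j<r. Mpoly r n j t * b j)" .
  have expand: "(\<Sum>i=1..r. t i * \<epsilon> ^ i) ^ n = (\<Sum>j\<le>r * n + r. Mpoly r n j t * \<epsilon> ^ j)" for \<epsilon>
    by (rule power_sum_Mpoly) simp
  show ?thesis
    unfolding limit expand
    by (intro tendsto_poly_times_laurent \<gamma> \<alpha>) simp_all
qed

lemma inverse_diff_geometric_expansion:
  fixes a d :: "'a::field"
  assumes "a \<noteq> 0" "a \<noteq> d"
  shows "1 / (a - d) = (\<Sum>n\<le>N. d ^ n / a ^ (n + 1)) + d ^ (N + 1) / (a ^ (N + 1) * (a - d))"
proof (induction N)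
  case 0
  then show ?case using assms by (simp add: field_simps)
next
  case (Suc N)
  have "d ^ (N + 1) / (a ^ (N + 1) * (a - d)) =
      d ^ (N + 1) / a ^ (N + 2) + d ^ (N + 2) / (a ^ (N + 2) * (a - d))"
    using assms by (simp add: field_simps)
  with Suc show ?case by simp
qed

lemma tendsto_confluence:
  fixes t w b \<AA> :: "nat \<Rightarrow> complex" and \<gamma> h :: "complex \<Rightarrow> complex"
    and \<alpha> :: "nat \<Rightarrow> complex \<Rightarrow> complex" and a h0 :: complex
  assumes a: "a \<noteq> 0"
    and \<gamma>: "((\<lambda>\<epsilon>. \<gamma> \<epsilon> - (\<Sum>s\<le>r. w s / \<epsilon> ^ s)) \<longlongrightarrow> 0) (at 0)"
    and \<alpha>: "\<And>j. j < r \<Longrightarrow>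
      ((\<lambda>\<epsilon>. \<alpha> j \<epsilon> - (b j - (\<Sum>s=Suc j..r. w s * \<epsilon> ^ j / \<epsilon> ^ s))) \<longlongrightarrow> 0) (at 0)"
    and \<AA>: "\<And>k. k \<le> r \<Longrightarrow> \<AA> k = (if k < r then w k + b k else w k)"
    and h: "(h \<longlongrightarrow> h0) (at 0)"
  shows "((\<lambda>\<epsilon>. (\<Sum>k<r. (\<Sum>j\<in>{k..<r}. Mpoly r k j t * \<alpha> j \<epsilon>) / a ^ (k + 1))
              + \<gamma> \<epsilon> / (a - (\<Sum>i=1..r. t i * \<epsilon> ^ i)) + h \<epsilon>)
           \<longlongrightarrow> (\<Sum>n\<le>r. (\<Sum>k=n..r. Mpoly r n k t * \<AA> k) / a ^ (n + 1)) + h0) (at 0)"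
proof -
  define \<delta> where "\<delta> \<epsilon> = (\<Sum>i=1..r. t i * \<epsilon> ^ i)" for \<epsilon>
  define E where "E n \<epsilon> = \<delta> \<epsilon> ^ n * \<gamma> \<epsilon> + (\<Sum>j<r. Mpoly r n j t * \<alpha> j \<epsilon>)" for n \<epsilon>
  define T where "T n = (\<Sum>k=n..r. Mpoly r n k t * \<AA> k)" for n
  have E_lim: "(E n \<longlongrightarrow> T n) (at 0)" for n
    unfolding E_def[abs_def] T_def \<delta>_def by (rule tendsto_Mpoly_laurent[OF \<gamma> \<alpha> \<AA>])
  have "(\<delta> \<longlongrightarrow> (\<Sum>i=1..r. t i * 0 ^ i)) (at 0)"
    unfolding \<delta>_def[abs_def] by (intro tendsto_intros)
  then have \<delta>_lim: "(\<delta> \<longlongrightarrow> 0) (at 0)"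
    by simp
  have "\<forall>\<^sub>F \<epsilon> in at 0. \<delta> \<epsilon> \<noteq> a"
    using tendsto_imp_eventually_ne[OF \<delta>_lim a[symmetric]] .
  then have "\<forall>\<^sub>F \<epsilon> in at 0. (\<Sum>n\<le>r. E n \<epsilon> / a ^ (n + 1)) + E (Suc r) \<epsilon> / (a ^ (r + 1) * (a - \<delta> \<epsilon>)) + h \<epsilon>
      = (\<Sum>k<r. (\<Sum>j\<in>{k..<r}. Mpoly r k j t * \<alpha> j \<epsilon>) / a ^ (k + 1)) + \<gamma> \<epsilon> / (a - \<delta> \<epsilon>) + h \<epsilon>"
  proof eventually_elim
    case (elim \<epsilon>)
    have "(\<Sum>k<r. (\<Sum>j\<in>{k..<r}. Mpoly r k j t * \<alpha> j \<epsilon>) / a ^ (k + 1)) =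
        (\<Sum>n\<le>r. (\<Sum>j<r. Mpoly r n j t * \<alpha> j \<epsilon>) / a ^ (n + 1))"
      by (simp add: sum_Mpoly_lessThan lessThan_Suc_atMost[symmetric] Mpoly_eq_0_if_less)
    moreover have "\<gamma> \<epsilon> / (a - \<delta> \<epsilon>) =
        (\<Sum>n\<le>r. \<delta> \<epsilon> ^ n * \<gamma> \<epsilon> / a ^ (n + 1)) + \<delta> \<epsilon> ^ (r + 1) * \<gamma> \<epsilon> / (a ^ (r + 1) * (a - \<delta> \<epsilon>))"
      unfolding divide_inverse
      by (subst inverse_eq_divide, subst inverse_diff_geometric_expansion[OF a elim[symmetric], of r])
        (simp add: sum_distrib_left distrib_left divide_inverse ac_simps)
    moreover have "E (Suc r) \<epsilon> = \<delta> \<epsilon> ^ (r + 1) * \<gamma> \<epsilon>"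
      by (simp add: E_def Mpoly_eq_0_if_less)
    ultimately show ?case
      by (simp add: E_def sum.distrib add_divide_distrib)
  qed
  moreover have "((\<lambda>\<epsilon>. (\<Sum>n\<le>r. E n \<epsilon> / a ^ (n + 1)) + E (Suc r) \<epsilon> / (a ^ (r + 1) * (a - \<delta> \<epsilon>)) + h \<epsilon>)
      \<longlongrightarrow> (\<Sum>n\<le>r. T n / a ^ (n + 1)) + T (Suc r) / (a ^ (r + 1) * (a - 0)) + h0) (at 0)"
    using a by (intro tendsto_intros E_lim \<delta>_lim h) simp_all
  ultimately show ?thesis
    by (simp add: T_def \<delta>_def Lim_transform_eventually)
qed

lemma csc_nth [simp]: "csc c X $ i $ j = c * X $ i $ j"
  by (simp add: csc_def)

lemma tendsto_has_asymp_exp_nth: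
  fixes f :: "complex \<Rightarrow> ('m::finite) cmat"
  assumes "has_asymp_exp f (- int n) c"
  shows "((\<lambda>\<epsilon>. f \<epsilon> $ i $ j - (\<Sum>l\<in>{- int n..0}. \<epsilon> powi l * c l $ i $ j)) \<longlongrightarrow> 0) (at 0)"
proof -
  obtain K where K: "\<forall>\<^sub>F \<epsilon> in at 0.
      norm (f \<epsilon> - (\<Sum>l\<in>{- int n..0}. csc (\<epsilon> powi l) (c l))) \<le> K * cmod \<epsilon> powr of_int (0 + 1)"
    using assms[unfolded has_asymp_exp_def, rule_format, of 0] by auto
  have entry: "norm (f \<epsilon> $ i $ j - (\<Sum>l\<in>{- int n..0}. \<epsilon> powi l * c l $ i $ j))
      \<le> norm (f \<epsilon> - (\<Sum>l\<in>{- int n..0}. csc (\<epsilon> powi l) (c l)))" for \<epsilon>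
    using order_trans[OF Finite_Cartesian_Product.norm_nth_le Finite_Cartesian_Product.norm_nth_le,
        of "f \<epsilon> - (\<Sum>l\<in>{- int n..0}. csc (\<epsilon> powi l) (c l))" i j]
    by simp
  have "\<forall>\<^sub>F \<epsilon> in at 0. norm (f \<epsilon> $ i $ j - (\<Sum>l\<in>{- int n..0}. \<epsilon> powi l * c l $ i $ j)) \<le> K * cmod \<epsilon>"
    using K by (rule eventually_mono) (rule order_trans[OF entry], simp)
  moreover have "((\<lambda>\<epsilon>. K * cmod \<epsilon>) \<longlongrightarrow> K * cmod 0) (at 0)"
    by (intro tendsto_intros)
  ultimately show ?thesis
    by (auto intro: Lim_null_comparison)
qed

lemma sum_powi_nonpos_reindex:
  fixes \<epsilon> :: "'a::field"
  shows "(\<Sum>l\<in>{- int n..0}. \<epsilon> powi l * f l) = (\<Sum>s\<le>n. f (- int s) / \<epsilon> ^ s)"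
proof -
  have "(\<Sum>s\<le>n. f (- int s) / \<epsilon> ^ s) = (\<Sum>l\<in>{- int n..0}. \<epsilon> powi l * f l)"
    by (rule sum.reindex_bij_witness[of _ "\<lambda>l. nat (- l)" "\<lambda>s. - int s"])
      (auto simp: power_int_minus divide_inverse mult.commute)
  then show ?thesis ..
qed

lemma sum_powi_shifted_reindex:
  fixes \<epsilon> :: "'a::field"
  assumes "\<epsilon> \<noteq> 0" "k \<le> r"
  shows "(\<Sum>l\<in>{- int (r - k)..0}. \<epsilon> powi l * (if l < 0 then - x (l - int k) else y (nat l)))
       = y 0 - (\<Sum>s=Suc k..r. x (- int s) * \<epsilon> ^ k / \<epsilon> ^ s)"
proof -
  have "(\<Sum>l\<in>{- int (r - k)..0}. \<epsilon> powi l * (if l < 0 then - x (l - int k) else y (nat l)))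
      = (\<Sum>s=k..r. \<epsilon> powi (int k - int s) * (if int k - int s < 0 then - x (- int s) else y (nat (int k - int s))))"
    using assms(2) by (intro sum.reindex_bij_witness[of _ "\<lambda>s. int k - int s" "\<lambda>l. nat (int k - l)"]) auto
  also have "\<dots> = y 0 + (\<Sum>s=Suc k..r. - (x (- int s) * \<epsilon> ^ k / \<epsilon> ^ s))"
    using assms by (simp add: sum.atLeast_Suc_atMost power_int_diff mult.commute)
  finally show ?thesis
    by (simp add: sum_negf)
qed

lemma tendsto_has_asymp_exp_nth_laurent:
  fixes f :: "complex \<Rightarrow> ('m::finite) cmat"
  assumes "has_asymp_exp f (- int n) c"
  shows "((\<lambda>\<epsilon>. f \<epsilon> $ i $ j - (\<Sum>s\<le>n. c (- int s) $ i $ j / \<epsilon> ^ s)) \<longlongrightarrow> 0) (at 0)"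
  using tendsto_has_asymp_exp_nth[OF assms, of i j] unfolding sum_powi_nonpos_reindex .

lemma tendsto_has_asymp_exp_nth_shifted:
  fixes g :: "complex \<Rightarrow> ('m::finite) cmat"
  assumes "has_asymp_exp g (- int (r - k)) (\<lambda>l. if l < 0 then - X (l - int k) else Y (nat l))"
    and "k \<le> r"
  shows "((\<lambda>\<epsilon>. g \<epsilon> $ i $ j - (Y 0 $ i $ j - (\<Sum>s=Suc k..r. X (- int s) $ i $ j * \<epsilon> ^ k / \<epsilon> ^ s)))
           \<longlongrightarrow> 0) (at 0)"
proof -
  have coeff: "(if l < 0 then - X (l - int k) else Y (nat l)) $ i $ j =
      (if l < 0 then - X (l - int k) $ i $ j else Y (nat l) $ i $ j)" for l
    by simp
  have "\<forall>\<^sub>F \<epsilon> in at 0.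
      g \<epsilon> $ i $ j - (\<Sum>l\<in>{- int (r - k)..0}. \<epsilon> powi l *
          (if l < 0 then - X (l - int k) $ i $ j else Y (nat l) $ i $ j))
      = g \<epsilon> $ i $ j - (Y 0 $ i $ j - (\<Sum>s=Suc k..r. X (- int s) $ i $ j * \<epsilon> ^ k / \<epsilon> ^ s))"
    using eventually_neq_at_within[of 0 0]
  proof eventually_elim
    case (elim \<epsilon>)
    show ?case
      using sum_powi_shifted_reindex[OF elim assms(2), of "\<lambda>l. X l $ i $ j" "\<lambda>l. Y l $ i $ j"] by simp
  qed
  with tendsto_has_asymp_exp_nth[OF assms(1), of i j] show ?thesis
    unfolding coeff by (rule Lim_transform_eventually)
qed

theorem theorem0p6:
  fixes r :: nat and u :: complex and t :: "nat \<Rightarrow> complex"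
    and A :: "nat \<Rightarrow> complex \<Rightarrow> ('m::finite) cmat"
    and C :: "complex \<Rightarrow> 'm cmat"
    and H :: "complex \<Rightarrow> complex \<Rightarrow> 'm cmat"
    and H0 :: "complex \<Rightarrow> 'm cmat"
    and W :: "int \<Rightarrow> 'm cmat" and Akl :: "nat \<Rightarrow> nat \<Rightarrow> 'm cmat"
    and Acon :: "complex \<Rightarrow> complex \<Rightarrow> 'm cmat"
    and U :: "complex set"
  assumes r: "r \<ge> 1"
    and U: "open U" "u \<in> U"
    and conn: "\<And>\<epsilon> z. Acon \<epsilon> z =
        (\<Sum>k<r. csc (1 / (z - u) ^ (k + 1))
                     (\<Sum>j=k..r-1. csc (Mpoly (r - 1) k j t) (A j \<epsilon>)))
        + csc (1 / (z - (u + (\<Sum>i=1..r. t i * \<epsilon> ^ i)))) (C \<epsilon>)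
        + H \<epsilon> z"
    and C_exp: "has_asymp_exp C (- int r) W"
    and A_exp: "\<And>k. k < r \<Longrightarrow> has_asymp_exp (A k) (- int (r - k))
                   (\<lambda>j. if j < 0 then - W (j - int k) else Akl k (nat j))"
    and H_holo: "\<forall>\<^sub>F \<epsilon> in at 0. mat_holo_on (H \<epsilon>) U"
    and H_lim: "\<And>z. z \<in> U \<Longrightarrow> ((\<lambda>\<epsilon>. H \<epsilon> z) \<longlongrightarrow> H0 z) (at 0)"
    and H0_holo: "mat_holo_on H0 U"
  shows "\<forall>z\<in>U - {u}. ((\<lambda>\<epsilon>. Acon \<epsilon> z) \<longlongrightarrow>
           (\<Sum>i=0..r. csc (1 / (z - u) ^ (i + 1))
               (\<Sum>k=i..r. csc (Mpoly r i k t)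
                  (if k < r then W (- int k) + Akl k 0 else W (- int r))))
           + H0 z) (at 0)"
proof (intro ballI vec_tendstoI)
  fix z p q
  assume z: "z \<in> U - {u}"
  have C_nth: "((\<lambda>\<epsilon>. C \<epsilon> $ p $ q - (\<Sum>s\<le>r. W (- int s) $ p $ q / \<epsilon> ^ s)) \<longlongrightarrow> 0) (at 0)"
    using C_exp by (rule tendsto_has_asymp_exp_nth_laurent)
  have A_nth: "((\<lambda>\<epsilon>. A j \<epsilon> $ p $ q - (Akl j 0 $ p $ q
      - (\<Sum>s=Suc j..r. W (- int s) $ p $ q * \<epsilon> ^ j / \<epsilon> ^ s))) \<longlongrightarrow> 0) (at 0)" if "j < r" for j
    using A_exp[OF that] by (rule tendsto_has_asymp_exp_nth_shifted) (use that in simp)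
  have A_tilde: "(if k < r then W (- int k) + Akl k 0 else W (- int r)) $ p $ q
      = (if k < r then W (- int k) $ p $ q + Akl k 0 $ p $ q else W (- int k) $ p $ q)" if "k \<le> r" for k
    using that by auto
  have H_nth: "((\<lambda>\<epsilon>. H \<epsilon> z $ p $ q) \<longlongrightarrow> H0 z $ p $ q) (at 0)"
    using z by (intro tendsto_vec_nth H_lim) simp
  have "z - u \<noteq> 0"
    using z by simp
  note limit = tendsto_confluence[OF this C_nth A_nth A_tilde H_nth, of t]
  obtain r' where r': "r = Suc r'"
    using r by (cases r) auto
  have "(\<Sum>j=k..r-1. csc (Mpoly (r - 1) k j t) (A j \<epsilon>)) $ p $ q =
      (\<Sum>j\<in>{k..<r}. Mpoly r k j t * A j \<epsilon> $ p $ q)" for k \<epsilon>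
    unfolding r' by (auto simp: atLeastLessThanSuc_atLeastAtMost Mpoly_Suc intro!: sum.cong)
  with limit show "((\<lambda>\<epsilon>. Acon \<epsilon> z $ p $ q) \<longlongrightarrow> ((\<Sum>i=0..r. csc (1 / (z - u) ^ (i + 1))
      (\<Sum>k=i..r. csc (Mpoly r i k t) (if k < r then W (- int k) + Akl k 0 else W (- int r)))) + H0 z) $ p $ q) (at 0)"
    by (simp add: conn atLeast0AtMost diff_diff_eq)
qed

end
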